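(* Let $n=2$ and consider the infinite-horizon LTI primary problem in the context with scalar input, whose optimal closed-loop matrix $M+N\Theta$ is over-damped. Let $\lambda_1$ be a real eigenvalue of $M+N\Theta$ with right eigenvector $V_1$, and let the closed loop be initialised at this single real mode ($x(t_0)=V_1$, $x(t)=V_1e^{\lambda_1t}$). If every eigenvalue $\bar\lambda$ of $\lambda_1I+M$ satisfies $\mathrm{Re}(\bar\lambda)<0$, then the hard-constrained IOC problem (with $c_3=E$ known) does not converge to the true weights.
   Context: Primary LTI problem: minimize $\int_{t_0}^{\infty}(x^TDx+u^TEu)\,dt$ subject to $\dot x=Mx+Nu$, $x(t_0)=x_0$, $x\in\mathbb{R}^n$, scalar $u$, $D$ diagonal nonnegative (unknown), $E>0$ known. The optimal control is $u=\Theta x$, $\Theta=-E^{-1}N^T\Pi$, with $\Pi$ the stabilizing solution of $M^T\Pi+\Pi M+D-\Pi NE^{-1}N^T\Pi=0$. The cost is $c^T\phi$ with $\phi=(x_1^2,\dots,x_n^2,u^2)^T$, $c=(D_{11},\dots,D_{nn},E)^T$. Hard-constrained IOC method: with $\nabla_x\phi(t)=\begin{bmatrix}2\,\mathrm{diag}(x(t))\\0_{1\times n}\end{bmatrix}$ and $\nabla_u\phi(t)=(0,\dots,0,2u(t))^T$ along the measured trajectories, let $L(t)=\int_t^{\infty}e^{-M^T(t-\tau)}\nabla_x\phi^T(\tau)\,d\tau$ (so that the costate is $p=Lc$), $W_1(t)=\nabla_u\phi^T(t)+N^TL(t)$, $W=\int_{t_0}^{\infty}W_1^T(t)W_1(t)\,dt$;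 the IOC problem is to minimize $c^TWc$ over $c$ with the known component fixed. *)

theory Defs
  imports "HOL-Analysis.Analysis"
begin

text \<open>State dimension n = 2 (index type 2), scalar input.
 Matrices are real^'n^'m (m rows, n columns); row vectors are plain vectors used with v*.\<close>

fun mpow :: "real^'n^'n \<Rightarrow> nat \<Rightarrow> real^'n^'n" where
  "mpow A 0 = mat 1"
| "mpow A (Suc k) = A ** mpow A k"

definition mexp :: "real^'n^'n \<Rightarrow> real^'n^'n" where
  "mexp A = (\<Sum>k. (1 / fact k :: real) *\<^sub>R mpow A k)"

definition cmat :: "real^'n^'n \<Rightarrow> complex^'n^'n" where
  "cmat A = (\<chi> i j. complex_of_real (A $ i $ j))"

definition is_eigenvalue :: "real^'n^'n \<Rightarrow> complex \<Rightarrow> bool" where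
  "is_eigenvalue A z \<longleftrightarrow> det (mat z - cmat A) = 0"

definition hurwitz :: "real^'n^'n \<Rightarrow> bool" where
  "hurwitz A \<longleftrightarrow> (\<forall>z. is_eigenvalue A z \<longrightarrow> Re z < 0)"

definition outer :: "real^'m \<Rightarrow> real^'n \<Rightarrow> real^'n^'m" where
  "outer a b = (\<chi> i j. a $ i * b $ j)"

definition gain :: "real^2 \<Rightarrow> real \<Rightarrow> real^2^2 \<Rightarrow> real^2" where
  "gain N E P = (- (1 / E)) *\<^sub>R (N v* P)"

definition closed_loop :: "real^2^2 \<Rightarrow> real^2 \<Rightarrow> real \<Rightarrow> real^2^2 \<Rightarrow> real^2^2" where
  "closed_loop M N E P = M + outer N (gain N E P)"

definition stabilizing_ARE_solution ::
  "real^2^2 \<Rightarrow> real^2 \<Rightarrow> real^2^2 \<Rightarrow> real \<Rightarrow> real^2^2 \<Rightarrow> bool" where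
  "stabilizing_ARE_solution M N D E P \<longleftrightarrow>
     transpose P = P \<and>
     transpose M ** P + P ** M + D - (1 / E) *\<^sub>R (P ** outer N N ** P) = 0 \<and>
     hurwitz (closed_loop M N E P)"

definition overdamped :: "real^2^2 \<Rightarrow> bool" where
  "overdamped A \<longleftrightarrow> (\<exists>l1 l2 :: real. l1 \<noteq> l2 \<and> l1 < 0 \<and> l2 < 0 \<and>
      is_eigenvalue A (complex_of_real l1) \<and> is_eigenvalue A (complex_of_real l2))"

text \<open>Gradients of phi = (x1^2, x2^2, u^2): nabla_x phi^T is 2x3, nabla_u phi is in R^3.\<close>
definition gradx_T :: "real^2 \<Rightarrow> real^3^2" where
  "gradx_T x = (\<chi> i k. if (k = 1 \<and> i = 1) \<or> (k = 2 \<and> i = 2) then 2 * x $ i else 0)"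

definition gradu :: "real \<Rightarrow> real^3" where
  "gradu u = (\<chi> k. if k = 3 then 2 * u else 0)"

definition Lmat :: "real^2^2 \<Rightarrow> (real \<Rightarrow> real^2) \<Rightarrow> real \<Rightarrow> real^3^2" where
  "Lmat M x t = integral {t..} (\<lambda>\<tau>. mexp ((\<tau> - t) *\<^sub>R transpose M) ** gradx_T (x \<tau>))"

definition W1 :: "real^2^2 \<Rightarrow> real^2 \<Rightarrow> (real \<Rightarrow> real^2) \<Rightarrow> (real \<Rightarrow> real) \<Rightarrow> real \<Rightarrow> real^3" where
  "W1 M N x u t = gradu (u t) + N v* Lmat M x t"

definition Wmat :: "real^2^2 \<Rightarrow> real^2 \<Rightarrow> (real \<Rightarrow> real^2) \<Rightarrow> (real \<Rightarrow> real) \<Rightarrow> real \<Rightarrow> real^3^3" where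
  "Wmat M N x u t0 = integral {t0..} (\<lambda>t. outer (W1 M N x u t) (W1 M N x u t))"

definition ioc_minimizer :: "real^3^3 \<Rightarrow> real \<Rightarrow> real^3 \<Rightarrow> bool" where
  "ioc_minimizer W E c \<longleftrightarrow> c $ 3 = E \<and>
     (\<forall>c'. c' $ 3 = E \<longrightarrow> c \<bullet> (W *v c) \<le> c' \<bullet> (W *v c'))"

end

(*
  Along the real mode x(t) = e^(lam1 t) V1 the input u = Theta x is e^(lam1 t) times a
  constant, and the substitution tau = t + s in the integral defining L gives
  L(t) = e^(lam1 t) L(0).  Hence W1(t) = e^(lam1 t) w with w = W1(0), and
  W = beta w w^T with beta = int e^(2 lam1 t) dt >= 0 has rank at most one.  On the plane
  c3 = E the IOC cost beta (w . c)^2 attains its minimum on a whole line (on the whole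
  plane if w1 = w2 = 0), so the minimiser is not unique and one of them differs from the
  true weights.
*)
theory Submission
  imports Defs
begin

lemma has_integral_translation_UNIV:
  fixes f :: "'a::euclidean_space \<Rightarrow> 'b::banach"
  assumes "(f has_integral I) UNIV"
  shows "((\<lambda>x. f (x + c)) has_integral I) UNIV"
proof -
  from assms have int: "\<And>a b. f integrable_on cbox a b"
    and lim: "\<And>e. e > 0 \<Longrightarrow>
      \<exists>B>0. \<forall>a b. ball 0 B \<subseteq> cbox a b \<longrightarrow> norm (integral (cbox a b) f - I) < e"
    by (simp_all add: has_integral_alt')
  have shifted_box:
    "integral (cbox a b) (\<lambda>x. f (x + c)) = integral (cbox (a + c) (b + c)) f" for a b
    using integral_shift_cbox[of "a + c" c "b + c" f] by simp
  show ?thesis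
  proof (unfold has_integral_alt', intro conjI allI impI)
    show "(\<lambda>x. if x \<in> UNIV then f (x + c) else 0) integrable_on cbox a b" for a b
      using integrable_shift_cbox[OF int[of "a + c" "b + c"], of c] by simp
  next
    fix e :: real
    assume "e > 0"
    then obtain B where "B > 0"
      and B: "\<And>a b. ball 0 B \<subseteq> cbox a b \<Longrightarrow> norm (integral (cbox a b) f - I) < e"
      using lim by blast
    have "norm (integral (cbox a b) (\<lambda>x. f (x + c)) - I) < e"
      if ab: "ball 0 (B + norm c) \<subseteq> cbox a b" for a b
    proof -
      have "ball 0 B \<subseteq> cbox (a + c) (b + c)"
      proof
        fix y :: 'a
        assume "y \<in> ball 0 B"
        then have "y - c \<in> ball 0 (B + norm c)"
          using norm_triangle_ineq4[of c y] by (simp add: dist_norm)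
        then have "y - c \<in> cbox a b" using ab by blast
        then show "y \<in> cbox (a + c) (b + c)"
          using cbox_shift'[of c a b] by force
      qed
      then show ?thesis using B shifted_box by simp
    qed
    then show "\<exists>B>0. \<forall>a b. ball 0 B \<subseteq> cbox a b \<longrightarrow>
        norm (integral (cbox a b) (\<lambda>x. if x \<in> UNIV then f (x + c) else 0) - I) < e"
      using \<open>B > 0\<close> by (intro exI[of _ "B + norm c"]) (auto simp: add_pos_nonneg)
  qed
qed

lemma integral_translation_UNIV:
  fixes f :: "'a::euclidean_space \<Rightarrow> 'b::banach"
  shows "integral UNIV (\<lambda>x. f (x + c)) = integral UNIV f"
proof (cases "f integrable_on UNIV")
  case True
  then show ?thesis
    by (metis has_integral_translation_UNIV integrable_integral integral_unique)
next
  case False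
  then have "\<not> (\<lambda>x. f (x + c)) integrable_on UNIV"
    using has_integral_translation_UNIV[of "\<lambda>x. f (x + c)" _ "- c"]
    by (auto simp: integrable_on_def)
  with False show ?thesis by (simp add: not_integrable_integral)
qed

lemma integral_atLeast_shift:
  fixes f :: "real \<Rightarrow> 'b::banach"
  shows "integral {t..} f = integral {0..} (\<lambda>s. f (s + t))"
proof -
  have "integral {t..} f = integral UNIV (\<lambda>x. if x \<in> {t..} then f x else 0)"
    by (simp only: integral_restrict_UNIV)
  also have "\<dots> = integral UNIV (\<lambda>s. if s + t \<in> {t..} then f (s + t) else 0)"
    by (rule integral_translation_UNIV[symmetric])
  also have "\<dots> = integral UNIV (\<lambda>s. if s \<in> {0..} then f (s + t) else 0)"
    by simp
  also have "\<dots> = integral {0..} (\<lambda>s. f (s + t))"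
    by (simp only: integral_restrict_UNIV)
  finally show ?thesis .
qed

lemma integral_scaleR_left_real:
  fixes f :: "'a::euclidean_space \<Rightarrow> real" and A :: "'b::euclidean_space"
  shows "integral S (\<lambda>x. f x *\<^sub>R A) = integral S f *\<^sub>R A"
proof (cases "f integrable_on S \<or> A = 0")
  case True
  then show ?thesis by (auto intro: has_integral_scaleR_left)
next
  case False
  then have "A \<bullet> A \<noteq> 0"
    by simp
  then have recover: "f x *\<^sub>R A \<bullet> (A /\<^sub>R (A \<bullet> A)) = f x" for x
    by (simp add: field_simps)
  have "\<not> (\<lambda>x. f x *\<^sub>R A) integrable_on S"
  proof
    assume "(\<lambda>x. f x *\<^sub>R A) integrable_on S"
    from integrable_linear[OF this bounded_linear_inner_left[of "A /\<^sub>R (A \<bullet> A)"]]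
    have "f integrable_on S"
      by (simp only: o_def recover)
    with False show False by blast
  qed
  with False show ?thesis by (simp add: not_integrable_integral)
qed

lemma gradx_T_scaleR: "gradx_T (k *\<^sub>R v) = k *\<^sub>R gradx_T v"
  by (simp add: vec_eq_iff gradx_T_def)

lemma gradu_mult: "gradu (k * a) = k *\<^sub>R gradu a"
  by (simp add: vec_eq_iff gradu_def)

lemma outer_scaleR: "outer (a *\<^sub>R v) (b *\<^sub>R w) = (a * b) *\<^sub>R outer v w"
  by (simp add: vec_eq_iff outer_def mult_ac)

lemma quadratic_form_outer: "c \<bullet> ((s *\<^sub>R outer w w) *v c) = s * (w \<bullet> c)\<^sup>2"
  for w c :: "real^'n"
  by (simp add: outer_def matrix_vector_mult_def inner_vec_def sum_distrib_left
      power2_eq_square mult_ac)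

lemma inner_vec_3: "(w::real^3) \<bullet> c = w$1 * c$1 + w$2 * c$2 + w$3 * c$3"
  by (simp add: inner_vec_def sum_3)

lemma Lmat_exponential_mode:
  "Lmat M (\<lambda>t. exp (l * t) *\<^sub>R v) t = exp (l * t) *\<^sub>R Lmat M (\<lambda>t. exp (l * t) *\<^sub>R v) 0"
proof -
  have "Lmat M (\<lambda>t. exp (l * t) *\<^sub>R v) t =
      integral {0..} (\<lambda>s. mexp (s *\<^sub>R transpose M) ** gradx_T (exp (l * (s + t)) *\<^sub>R v))"
    unfolding Lmat_def by (subst integral_atLeast_shift) simp
  also have "\<dots> = integral {0..} (\<lambda>s.
      exp (l * t) *\<^sub>R (mexp (s *\<^sub>R transpose M) ** gradx_T (exp (l * s) *\<^sub>R v)))"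
    by (simp add: gradx_T_scaleR matrix_scalar_ac scalar_matrix_assoc[symmetric]
        distrib_left exp_add mult.commute)
  finally show ?thesis
    by (simp add: Lmat_def)
qed

lemma W1_exponential_mode:
  assumes "x = (\<lambda>t. exp (l * t) *\<^sub>R v)" and "u = (\<lambda>t. K \<bullet> x t)"
  shows "W1 M N x u t = exp (l * t) *\<^sub>R W1 M N x u 0"
  unfolding W1_def assms Lmat_exponential_mode[of M l v t]
  by (simp add: gradu_mult vector_scaleR_matrix_ac scaleR_add_right)

lemma Wmat_rank_one:
  assumes "\<And>t. W1 M N x u t = g t *\<^sub>R w"
  shows "Wmat M N x u t0 = integral {t0..} (\<lambda>t. (g t)\<^sup>2) *\<^sub>R outer w w"
  unfolding Wmat_def assms outer_scaleR
  by (simp add: integral_scaleR_left_real power2_eq_square)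

lemma ioc_minimizer_rank_oneI:
  assumes "\<beta> \<ge> 0" and "c $ 3 = E"
    and "\<And>c'. c' $ 3 = E \<Longrightarrow> (w \<bullet> c)\<^sup>2 \<le> (w \<bullet> c')\<^sup>2"
  shows "ioc_minimizer (\<beta> *\<^sub>R outer w w) E c"
  using assms by (simp add: ioc_minimizer_def quadratic_form_outer mult_left_mono)

lemma ioc_minimizer_rank_one_not_unique:
  fixes w :: "real^3"
  assumes "\<beta> \<ge> 0"
  obtains c c' where "c \<noteq> c'"
    "ioc_minimizer (\<beta> *\<^sub>R outer w w) E c" "ioc_minimizer (\<beta> *\<^sub>R outer w w) E c'"
proof (cases "w $ 1 = 0 \<and> w $ 2 = 0")
  case True
  then have "w \<bullet> c = w $ 3 * E" if "c $ 3 = E" for c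
    using that by (simp add: inner_vec_3)
  then have "ioc_minimizer (\<beta> *\<^sub>R outer w w) E (vector [a, 0, E])" for a
    using assms by (intro ioc_minimizer_rank_oneI) simp_all
  from this[of 0] this[of 1] show ?thesis
    by (rule that[rotated]) (metis vector_3(1) zero_neq_one)
next
  case False
  define s where "s = (w $ 1)\<^sup>2 + (w $ 2)\<^sup>2"
  have "s > 0"
    using False by (auto simp: s_def add_pos_nonneg add_nonneg_pos)
  \<comment> \<open>the points p + a d form a line in the plane c3 = E orthogonal to w\<close>
  define p :: "real^3"
    where "p = (1 / s) *\<^sub>R vector [- w $ 3 * E * w $ 1, - w $ 3 * E * w $ 2, E * s]"
  define d :: "real^3" where "d = vector [- w $ 2, w $ 1, 0]"
  have "w \<bullet> vector [- w $ 3 * E * w $ 1, - w $ 3 * E * w $ 2, E * s] = 0" "w \<bullet> d = 0"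
    by (simp_all add: inner_vec_3 d_def s_def power2_eq_square algebra_simps)
  then have "w \<bullet> (p + a *\<^sub>R d) = 0" for a
    by (simp add: p_def inner_add_right)
  then have "ioc_minimizer (\<beta> *\<^sub>R outer w w) E (p + a *\<^sub>R d)" for a
    using assms \<open>s > 0\<close> by (intro ioc_minimizer_rank_oneI) (simp_all add: p_def d_def)
  moreover have "p \<noteq> p + 1 *\<^sub>R d"
    using False by (auto simp: d_def vec_eq_iff forall_3)
  ultimately show ?thesis
    by (metis that add_0_right scale_zero_left)
qed

theorem lemma2:
  fixes M :: "real^2^2" and N :: "real^2" and D :: "real^2^2" and E :: real
    and P :: "real^2^2" and lam1 :: real and V1 :: "real^2"
  assumes D_diag: "\<forall>i j. i \<noteq> j \<longrightarrow> D $ i $ j = 0"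
    and D_nonneg: "\<forall>i. D $ i $ i \<ge> 0"
    and E_pos: "E > 0"
    and Pi: "stabilizing_ARE_solution M N D E P"
    and od: "overdamped (closed_loop M N E P)"
    and eig: "V1 \<noteq> 0" "closed_loop M N E P *v V1 = lam1 *\<^sub>R V1"
    and shifted: "\<forall>z. is_eigenvalue (mat lam1 + M) z \<longrightarrow> Re z < 0"
  shows "let x = (\<lambda>t. exp (lam1 * t) *\<^sub>R V1);
             u = (\<lambda>t. gain N E P \<bullet> x t);
             c_true = (vector [D $ 1 $ 1, D $ 2 $ 2, E] :: real^3);
             W = Wmat M N x u 0
         in \<exists>c. ioc_minimizer W E c \<and> c \<noteq> c_true"
proof -
  define x where "x = (\<lambda>t. exp (lam1 * t) *\<^sub>R V1)"
  define u where "u = (\<lambda>t. gain N E P \<bullet> x t)"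
  define w where "w = W1 M N x u 0"
  have "W1 M N x u t = exp (lam1 * t) *\<^sub>R w" for t
    unfolding w_def by (rule W1_exponential_mode[OF x_def u_def])
  then have W:
    "Wmat M N x u 0 = integral {0..} (\<lambda>t. (exp (lam1 * t))\<^sup>2) *\<^sub>R outer w w"
    by (rule Wmat_rank_one)
  have "integral {0..} (\<lambda>t. (exp (lam1 * t))\<^sup>2) \<ge> 0"
    by (cases "(\<lambda>t. (exp (lam1 * t))\<^sup>2) integrable_on {0..}")
      (simp_all add: integral_nonneg not_integrable_integral)
  then obtain c c' where "c \<noteq> c'"
    "ioc_minimizer (Wmat M N x u 0) E c" "ioc_minimizer (Wmat M N x u 0) E c'"
    unfolding W by (rule ioc_minimizer_rank_one_not_unique)
  then show ?thesis
    unfolding Let_def x_def[symmetric] u_def[symmetric] by metis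
qed

end
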